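(* Let $n\ge2$, $\nu,\beta>0$, $\rho>1$, let $X_1,\ldots,X_n$ be i.i.d. $\mathrm{Pareto}(\nu,\beta)$ and $M_n\coloneqq\frac{\log X_{(n)}-\log X_{(1)}}{\log\rho}+1$. Then for $t<\beta\log\rho$, \[\mathbb{E}e^{tM_n}=(n-1)e^tB\!\left(1-\frac{t}{\beta\log\rho},\,n-1\right),\] so that \begin{align*} \mathbb{E}M_n&=1+\frac{\psi(n)+\gamma}{\beta\log\rho}\sim\frac{\log n}{\beta\log\rho},\\ \mathrm{Var}(M_n)&=\frac{\frac{\pi^2}{6}-\psi_1(n)}{\beta^2\log^2\rho}\sim\frac{\pi^2}{6\beta^2\log^2\rho},\\ \mathrm{Skew}(M_n)&=\frac{2\zeta(3)+\psi_2(n)}{\left[\frac{\pi^2}{6}-\psi_1(n)\right]^{3/2}}\sim\frac{12\sqrt6\,\zeta(3)}{\pi^3}, \end{align*} where the asymptotic results hold as $n\to\infty$.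
   Context: $\mathrm{Pareto}(\nu,\beta)$ has CDF $1-(\nu/x)^\beta$ for $x>\nu$. $B$ is the Beta function, $\psi$ the digamma function, $\psi_m=\psi^{(m)}$ the polygamma functions, $\gamma$ Euler's constant, $\zeta(3)=\sum_{k\ge1}k^{-3}$, and $\mathrm{Skew}(X)=\mathbb{E}[((X-\mathbb{E}X)/\sqrt{\mathrm{Var}(X)})^3]$. *)

theory Defs
  imports "HOL-Probability.Probability" "HOL-Library.Landau_Symbols"
begin

definition pareto_cdf :: "real \<Rightarrow> real \<Rightarrow> real \<Rightarrow> real" where
  "pareto_cdf \<nu> \<beta> x = (if \<nu> < x then 1 - (\<nu> / x) powr \<beta> else 0)"

definition zeta3 :: real where
  "zeta3 = (\<Sum>k. 1 / (real (Suc k)) ^ 3)"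

definition var_of :: "'a measure \<Rightarrow> ('a \<Rightarrow> real) \<Rightarrow> real" where
  "var_of M Y = (\<integral>\<omega>. (Y \<omega> - (\<integral>\<omega>'. Y \<omega>' \<partial>M))\<^sup>2 \<partial>M)"

definition skew_of :: "'a measure \<Rightarrow> ('a \<Rightarrow> real) \<Rightarrow> real" where
  "skew_of M Y = (\<integral>\<omega>. ((Y \<omega> - (\<integral>\<omega>'. Y \<omega>' \<partial>M)) / sqrt (var_of M Y)) ^ 3 \<partial>M)"

definition range_stat :: "real \<Rightarrow> nat \<Rightarrow> (nat \<Rightarrow> 'a \<Rightarrow> real) \<Rightarrow> 'a \<Rightarrow> real" where
  "range_stat \<rho> n Y \<omega> =
     (ln (Max ((\<lambda>i. Y i \<omega>) ` {..<n})) - ln (Min ((\<lambda>i. Y i \<omega>) ` {..<n}))) / ln \<rho> + 1"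

end

(*
  Write W = beta (ln X_(n) - ln X_(1)), so that M_n = W / (beta ln rho) + 1.  Splitting the event
  W <= r according to the first index j at which the minimum is attained and integrating over its
  value y > nu, each of the other n - 1 observations must lie in [y, e^(r/beta) y], which has
  probability (nu/y)^beta (1 - e^(-r)); integrating against the Pareto density yields
  P(W <= r) = (1 - e^(-r))^(n-1).  So W is distributed as the maximum of m = n - 1 independent
  standard exponential variables, whose density m e^(-w) (1 - e^(-w))^(m-1) is the alternating
  combination of the exponential densities (i+1) e^(-(i+1) w) with coefficients (-1)^i C(m, i+1).
  Hence all moments of W are alternating binomial sums: E e^(sW) = prod_(i=1..m) i / (i - s)
  = m B(1 - s, m), and the mean, variance and third central moment are H_m, sum_(i<=m) 1/i^2 and
  2 sum_(i<=m) 1/i^3, which are digamma and polygamma values at n.  The asymptotics follow from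
  H_m - ln m -> gamma and psi_k(n) -> 0 for k >= 1.
*)

theory Submission
  imports Defs
begin

section \<open>Alternating binomial sums\<close>

definition alt_binom_sum :: "nat \<Rightarrow> (nat \<Rightarrow> real) \<Rightarrow> real" where
  "alt_binom_sum m \<phi> = (\<Sum>i<m. (-1) ^ i * real (m choose Suc i) * \<phi> i)"

lemma alt_binom_sum_Suc:
  "alt_binom_sum (Suc m) \<phi> =
     alt_binom_sum m \<phi> + alt_binom_sum (Suc m) (\<lambda>i. real (Suc i) * \<phi> i) / real (Suc m)"
proof -
  have "alt_binom_sum (Suc m) \<phi> = (\<Sum>i<Suc m. (-1) ^ i * real (m choose i) * \<phi> i) + alt_binom_sum m \<phi>"
    unfolding alt_binom_sum_def by (simp add: algebra_simps sum.distrib)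
  also have "(\<Sum>i<Suc m. (-1) ^ i * real (m choose i) * \<phi> i)
      = alt_binom_sum (Suc m) (\<lambda>i. real (Suc i) * \<phi> i) / real (Suc m)"
    unfolding alt_binom_sum_def sum_divide_distrib
  proof (rule sum.cong[OF refl])
    fix i
    have "real (Suc m) * real (m choose i) = real (Suc m choose Suc i) * real (Suc i)"
      using Suc_times_binomial_eq[of m i] by (metis of_nat_mult)
    then show "(-1) ^ i * real (m choose i) * \<phi> i
        = (-1) ^ i * real (Suc m choose Suc i) * (real (Suc i) * \<phi> i) / real (Suc m)"
      by (simp add: field_simps del: of_nat_Suc binomial_Suc_Suc)
  qed
  finally show ?thesis by simp
qed

lemma alt_binom_sum_const_1: "0 < m \<Longrightarrow> alt_binom_sum m (\<lambda>_. 1) = 1"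
proof -
  assume m: "0 < m"
  have "(\<Sum>i\<le>m. (-1) ^ i * real (m choose i)) = 0"
    using choose_alternating_sum[OF m] by simp
  moreover have "(\<Sum>i\<le>m. (-1) ^ i * real (m choose i)) = 1 - alt_binom_sum m (\<lambda>_. 1)"
    unfolding alt_binom_sum_def
    by (subst sum.atMost_shift) (simp add: lessThan_Suc_atMost sum_negf)
  ultimately show ?thesis by simp
qed

definition alt_binom_harm :: "nat \<Rightarrow> nat \<Rightarrow> real" where
  "alt_binom_harm k m = alt_binom_sum m (\<lambda>i. 1 / real (Suc i) ^ k)"

lemma alt_binom_harm_Suc_Suc:
  "alt_binom_harm (Suc k) (Suc m) = alt_binom_harm (Suc k) m + alt_binom_harm k (Suc m) / real (Suc m)"
  unfolding alt_binom_harm_def by (subst alt_binom_sum_Suc) (simp del: of_nat_Suc)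

lemma alt_binom_harm_0: "0 < m \<Longrightarrow> alt_binom_harm 0 m = 1"
  unfolding alt_binom_harm_def using alt_binom_sum_const_1 by simp

lemma alt_binom_harm_1: "alt_binom_harm 1 m = harm m"
proof (induction m)
  case (Suc m)
  then show ?case
    using alt_binom_harm_Suc_Suc[of 0 m] alt_binom_harm_0[of "Suc m"]
    by (simp add: harm_Suc inverse_eq_divide)
qed (simp add: harm_def alt_binom_harm_def alt_binom_sum_def)

lemma alt_binom_harm_2_Suc:
  "alt_binom_harm 2 (Suc m) = alt_binom_harm 2 m + harm (Suc m) / real (Suc m)"
  using alt_binom_harm_Suc_Suc[of 1 m, unfolded alt_binom_harm_1] by (simp add: numeral_2_eq_2)

lemma alt_binom_harm_central_2:
  "2 * alt_binom_harm 2 m - (harm m)\<^sup>2 = (\<Sum>i<m. 1 / real (Suc i) ^ 2)"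
proof (induction m)
  case (Suc m)
  define d where "d = 1 / real (Suc m)"
  have h: "harm (Suc m) = harm m + d" by (simp add: harm_Suc d_def inverse_eq_divide)
  have S2: "alt_binom_harm 2 (Suc m) = alt_binom_harm 2 m + (harm m + d) * d"
    unfolding alt_binom_harm_2_Suc h by (simp add: d_def)
  have "2 * alt_binom_harm 2 (Suc m) - (harm (Suc m))\<^sup>2
      = (2 * alt_binom_harm 2 m - (harm m)\<^sup>2) + d\<^sup>2"
    unfolding S2 h by (simp add: power2_eq_square algebra_simps)
  then show ?case using Suc by (simp add: d_def power_divide)
qed (simp add: harm_def alt_binom_harm_def alt_binom_sum_def)

lemma alt_binom_harm_central_3:
  "6 * alt_binom_harm 3 m - 6 * harm m * alt_binom_harm 2 m + 2 * (harm m) ^ 3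
     = 2 * (\<Sum>i<m. 1 / real (Suc i) ^ 3)"
proof (induction m)
  case (Suc m)
  define d where "d = 1 / real (Suc m)"
  have h: "harm (Suc m) = harm m + d" by (simp add: harm_Suc d_def inverse_eq_divide)
  have S2: "alt_binom_harm 2 (Suc m) = alt_binom_harm 2 m + (harm m + d) * d"
    unfolding alt_binom_harm_2_Suc h by (simp add: d_def)
  have S3: "alt_binom_harm 3 (Suc m) = alt_binom_harm 3 m + alt_binom_harm 2 (Suc m) * d"
    using alt_binom_harm_Suc_Suc[of 2 m] by (simp add: numeral_3_eq_3 numeral_2_eq_2 d_def)
  have "6 * alt_binom_harm 3 (Suc m) - 6 * harm (Suc m) * alt_binom_harm 2 (Suc m) + 2 * (harm (Suc m)) ^ 3
     = (6 * alt_binom_harm 3 m - 6 * harm m * alt_binom_harm 2 m + 2 * (harm m) ^ 3) + 2 * d ^ 3"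
    unfolding S3 S2 h by (simp add: power3_eq_cube algebra_simps)
  then show ?case using Suc by (simp add: d_def power_divide)
qed (simp add: harm_def alt_binom_harm_def alt_binom_sum_def)

lemma alt_binom_sum_eq_prod:
  fixes s :: real
  assumes "s < 1" "0 < m"
  shows "alt_binom_sum m (\<lambda>i. real (Suc i) / (real (Suc i) - s))
           = (\<Prod>i<m. real (Suc i) / (real (Suc i) - s))"
  using assms(2)
proof (induction m rule: nat_induct_non_zero)
  case 1
  then show ?case by (simp add: alt_binom_sum_def)
next
  case (Suc m)
  define P where "P m = alt_binom_sum m (\<lambda>i. real (Suc i) / (real (Suc i) - s))" for m
  define T where "T m = alt_binom_sum m (\<lambda>i. 1 / (real (Suc i) - s))" for m
  have P_T: "P k = 1 + s * T k" if "0 < k" for k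
  proof -
    have "P k = alt_binom_sum k (\<lambda>_. 1) + s * T k"
      unfolding P_def T_def alt_binom_sum_def using assms(1)
      by (simp add: sum_distrib_left sum.distrib[symmetric] field_simps)
    then show ?thesis using alt_binom_sum_const_1[OF that] by simp
  qed
  have "T (Suc m) = T m + P (Suc m) / real (Suc m)"
    unfolding T_def P_def by (subst alt_binom_sum_Suc) (simp del: of_nat_Suc)
  then have "P (Suc m) * (real (Suc m) - s) = P m * real (Suc m)"
    using P_T[of m] P_T[of "Suc m"] Suc.hyps by (simp add: field_simps)
  moreover have "0 < real (Suc m) - s" using assms(1) by simp
  ultimately have "P (Suc m) = P m * (real (Suc m) / (real (Suc m) - s))"
    by (simp add: field_simps)
  then show ?case using Suc.IH unfolding P_def by simp
qed

lemma Beta_eq_prod: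
  fixes s :: real
  assumes "s < 1" "0 < m"
  shows "real m * Beta (1 - s) (real m) = (\<Prod>i<m. real (Suc i) / (real (Suc i) - s))"
  using assms(2)
proof (induction m rule: nat_induct_non_zero)
  case 1
  have "(1 - s) * Beta (1 - s) 1 = Gamma (1 - s) * ((1 - s) * rGamma (1 - s + 1))"
    unfolding Beta_altdef by (simp add: mult_ac)
  also have "\<dots> = 1"
    unfolding rGamma_plus1 rGamma_inverse_Gamma[of "1 - s"] using assms(1)
    by (intro right_inverse) (auto elim!: nonpos_Ints_cases simp: Gamma_eq_zero_iff)
  finally show ?case using assms(1) by (simp add: field_simps)
next
  case (Suc m)
  have "(1 - s + real m) * Beta (1 - s) (real m + 1) = real m * Beta (1 - s) (real m)"
    using Suc.hyps by (intro Beta_plus1_right) (auto elim!: nonpos_Ints_cases)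
  then have "real (Suc m) * Beta (1 - s) (real (Suc m))
      = real m * Beta (1 - s) (real m) * (real (Suc m) / (real (Suc m) - s))"
    using assms(1) by (simp add: field_simps)
  then show ?case using Suc.IH by simp
qed

section \<open>The maximum of independent standard exponential variables\<close>

definition exp_max_density :: "nat \<Rightarrow> real \<Rightarrow> real" where
  "exp_max_density m w = (if 0 \<le> w then real m * exp (- w) * (1 - exp (- w)) ^ (m - 1) else 0)"

lemma exp_max_density_nonneg: "0 \<le> exp_max_density m w"
  unfolding exp_max_density_def by (auto intro!: mult_nonneg_nonneg zero_le_power)

lemma borel_measurable_exp_max_density [measurable]: "exp_max_density m \<in> borel_measurable borel"
  unfolding exp_max_density_def by measurable

lemma exp_max_density_eq_alt_binom_sum:
  assumes "0 < m"
  shows "exp_max_density m w = alt_binom_sum m (\<lambda>i. exponential_density (real (Suc i)) w)"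
proof (cases "0 \<le> w")
  case False
  then show ?thesis by (simp add: exp_max_density_def exponential_density_def alt_binom_sum_def)
next
  case True
  obtain m' where m: "m = Suc m'" using assms by (cases m) auto
  have "alt_binom_sum m (\<lambda>i. exponential_density (real (Suc i)) w)
      = (\<Sum>i\<le>m'. real m * exp (- w) * (real (m' choose i) * (- exp (- w)) ^ i * 1 ^ (m' - i)))"
    unfolding alt_binom_sum_def m lessThan_Suc_atMost
  proof (rule sum.cong[OF refl])
    fix i
    have "real (Suc m' choose Suc i) * real (Suc i) = real (Suc m') * real (m' choose i)"
      using Suc_times_binomial_eq[of m' i] by (metis of_nat_mult)
    moreover have "exp (- w * real (Suc i)) = exp (- w) * exp (- w) ^ i"
      by (simp only: exp_of_nat_mult[symmetric] mult_exp_exp) (simp add: algebra_simps)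
    ultimately show "(-1) ^ i * real (Suc m' choose Suc i) * exponential_density (real (Suc i)) w
        = real (Suc m') * exp (- w) * (real (m' choose i) * (- exp (- w)) ^ i * 1 ^ (m' - i))"
      using True unfolding exponential_density_def power_minus[of "exp (- w)"]
      by (simp add: algebra_simps del: of_nat_Suc binomial_Suc_Suc)
  qed
  also have "\<dots> = real m * exp (- w) * (- exp (- w) + 1) ^ m'"
    by (subst binomial_ring[of "- exp (- w)" 1 m']) (simp add: sum_distrib_left)
  finally show ?thesis using True m by (simp add: exp_max_density_def)
qed

lemma has_bochner_integral_exponential_density_power:
  assumes "0 < l"
  shows "has_bochner_integral lborel (\<lambda>x. exponential_density l x * x ^ k) (fact k / l ^ k)"
proof (rule has_bochner_integral_nn_integral)
  show "(\<integral>\<^sup>+ x. ennreal (exponential_density l x * x ^ k) \<partial>lborel) = ennreal (fact k / l ^ k)"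
    using nn_integral_erlang_ith_moment[OF assms, of 0 k] by simp
  show "AE x in lborel. 0 \<le> exponential_density l x * x ^ k"
    using assms by (auto simp: exponential_density_def)
qed (use assms in auto)

lemma has_bochner_integral_exponential_density_exp:
  assumes "s < l"
  shows "has_bochner_integral lborel (\<lambda>x. exponential_density l x * exp (s * x)) (l / (l - s))"
proof -
  have "exponential_density l x * exp (s * x) = l / (l - s) * exponential_density (l - s) x" for x
  proof -
    have "exp (- x * l) * exp (s * x) = exp (- x * (l - s))" by (simp add: mult_exp_exp algebra_simps)
    then show ?thesis using assms by (auto simp: exponential_density_def)
  qed
  moreover have "has_bochner_integral lborel (\<lambda>x. exponential_density (l - s) x * x ^ 0) (fact 0 / (l - s) ^ 0)"
    using assms by (intro has_bochner_integral_exponential_density_power) auto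
  then have "has_bochner_integral lborel (\<lambda>x. l / (l - s) * exponential_density (l - s) x) (l / (l - s) * 1)"
    by (intro has_bochner_integral_mult_right) simp
  ultimately show ?thesis by simp
qed

lemma has_bochner_integral_exp_max_density_mult:
  assumes "0 < m"
    and "\<And>i. i < m \<Longrightarrow> has_bochner_integral lborel (\<lambda>x. exponential_density (real (Suc i)) x * f x) (I i)"
  shows "has_bochner_integral lborel (\<lambda>x. exp_max_density m x * f x) (alt_binom_sum m I)"
proof -
  have "has_bochner_integral lborel
      (\<lambda>x. \<Sum>i<m. (-1) ^ i * real (m choose Suc i) * (exponential_density (real (Suc i)) x * f x))
      (alt_binom_sum m I)"
    unfolding alt_binom_sum_def by (intro has_bochner_integral_sum has_bochner_integral_mult_right assms) auto
  then show ?thesis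
    by (simp add: exp_max_density_eq_alt_binom_sum[OF assms(1)] alt_binom_sum_def sum_distrib_right mult.assoc)
qed

lemma has_bochner_integral_exp_max_density_power:
  assumes "0 < m"
  shows "has_bochner_integral lborel (\<lambda>w. exp_max_density m w * w ^ k) (fact k * alt_binom_harm k m)"
proof -
  have "has_bochner_integral lborel (\<lambda>w. exp_max_density m w * w ^ k)
      (alt_binom_sum m (\<lambda>i. fact k / real (Suc i) ^ k))"
    by (intro has_bochner_integral_exp_max_density_mult assms has_bochner_integral_exponential_density_power) simp
  then show ?thesis
    unfolding alt_binom_harm_def alt_binom_sum_def by (simp add: sum_distrib_left algebra_simps)
qed

lemma has_bochner_integral_exp_max_density_exp:
  assumes "0 < m" "s < 1"
  shows "has_bochner_integral lborel (\<lambda>w. exp_max_density m w * exp (s * w)) (real m * Beta (1 - s) (real m))"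
proof -
  have "has_bochner_integral lborel (\<lambda>w. exp_max_density m w * exp (s * w))
      (alt_binom_sum m (\<lambda>i. real (Suc i) / (real (Suc i) - s)))"
    using assms
    by (intro has_bochner_integral_exp_max_density_mult has_bochner_integral_exponential_density_exp) auto
  then show ?thesis
    unfolding alt_binom_sum_eq_prod[OF assms(2,1)] Beta_eq_prod[OF assms(2,1)] .
qed

lemma has_bochner_integral_exp_max_density_affine:
  assumes "0 < m"
  shows "has_bochner_integral lborel (\<lambda>w. exp_max_density m w * (a * w + b)) (a * harm m + b)"
proof -
  have "has_bochner_integral lborel (\<lambda>w. a * (exp_max_density m w * w ^ 1) + b * (exp_max_density m w * w ^ 0))
      (a * (fact 1 * alt_binom_harm 1 m) + b * (fact 0 * alt_binom_harm 0 m))"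
    by (intro has_bochner_integral_add has_bochner_integral_mult_right has_bochner_integral_exp_max_density_power assms)
  then show ?thesis
    unfolding alt_binom_harm_1 alt_binom_harm_0[OF assms] by (simp add: algebra_simps)
qed

lemma has_bochner_integral_exp_max_density_central_2:
  assumes "0 < m"
  shows "has_bochner_integral lborel (\<lambda>w. exp_max_density m w * (w - harm m)\<^sup>2)
           (\<Sum>i<m. 1 / real (Suc i) ^ 2)"
proof -
  let ?g = "exp_max_density m" and ?h = "harm m"
  note moment = has_bochner_integral_exp_max_density_power[OF assms]
  have "has_bochner_integral lborel
      (\<lambda>w. ?g w * w ^ 2 - 2 * ?h * (?g w * w ^ 1) + ?h\<^sup>2 * (?g w * w ^ 0))
      (fact 2 * alt_binom_harm 2 m - 2 * ?h * (fact 1 * alt_binom_harm 1 m) + ?h\<^sup>2 * (fact 0 * alt_binom_harm 0 m))"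
    by (intro has_bochner_integral_add has_bochner_integral_diff has_bochner_integral_mult_right moment)
  moreover have "(\<lambda>w. ?g w * w ^ 2 - 2 * ?h * (?g w * w ^ 1) + ?h\<^sup>2 * (?g w * w ^ 0))
      = (\<lambda>w. ?g w * (w - ?h)\<^sup>2)"
    by (auto simp: power2_eq_square algebra_simps)
  moreover have "fact 2 * alt_binom_harm 2 m - 2 * ?h * (fact 1 * alt_binom_harm 1 m) + ?h\<^sup>2 * (fact 0 * alt_binom_harm 0 m)
      = (\<Sum>i<m. 1 / real (Suc i) ^ 2)"
    using alt_binom_harm_central_2[of m] unfolding alt_binom_harm_0[OF assms] alt_binom_harm_1
    by (simp add: power2_eq_square)
  ultimately show ?thesis by simp
qed

lemma has_bochner_integral_exp_max_density_central_3:
  assumes "0 < m"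
  shows "has_bochner_integral lborel (\<lambda>w. exp_max_density m w * (w - harm m) ^ 3)
           (2 * (\<Sum>i<m. 1 / real (Suc i) ^ 3))"
proof -
  let ?g = "exp_max_density m" and ?h = "harm m"
  note moment = has_bochner_integral_exp_max_density_power[OF assms]
  have "has_bochner_integral lborel
      (\<lambda>w. ?g w * w ^ 3 - 3 * ?h * (?g w * w ^ 2) + 3 * ?h\<^sup>2 * (?g w * w ^ 1) - ?h ^ 3 * (?g w * w ^ 0))
      (fact 3 * alt_binom_harm 3 m - 3 * ?h * (fact 2 * alt_binom_harm 2 m)
        + 3 * ?h\<^sup>2 * (fact 1 * alt_binom_harm 1 m) - ?h ^ 3 * (fact 0 * alt_binom_harm 0 m))"
    by (intro has_bochner_integral_add has_bochner_integral_diff has_bochner_integral_mult_right moment)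
  moreover have "(\<lambda>w. ?g w * w ^ 3 - 3 * ?h * (?g w * w ^ 2) + 3 * ?h\<^sup>2 * (?g w * w ^ 1) - ?h ^ 3 * (?g w * w ^ 0))
      = (\<lambda>w. ?g w * (w - ?h) ^ 3)"
    by (auto simp: power2_eq_square power3_eq_cube algebra_simps)
  moreover have "fact 3 * alt_binom_harm 3 m - 3 * ?h * (fact 2 * alt_binom_harm 2 m)
        + 3 * ?h\<^sup>2 * (fact 1 * alt_binom_harm 1 m) - ?h ^ 3 * (fact 0 * alt_binom_harm 0 m)
      = 2 * (\<Sum>i<m. 1 / real (Suc i) ^ 3)"
    using alt_binom_harm_central_3[of m] unfolding alt_binom_harm_0[OF assms] alt_binom_harm_1
    by (simp add: fact_numeral power2_eq_square power3_eq_cube)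
  ultimately show ?thesis by simp
qed

lemma emeasure_exp_max_density_atMost:
  assumes "0 < m"
  shows "emeasure (density lborel (exp_max_density m)) {..x} = (if 0 \<le> x then (1 - exp (- x)) ^ m else 0)"
proof (cases "0 \<le> x")
  case False
  then have "(\<integral>\<^sup>+ t. ennreal (exp_max_density m t) * indicator {..x} t \<partial>lborel) = (\<integral>\<^sup>+ t. 0 \<partial>(lborel :: real measure))"
    by (intro nn_integral_cong) (auto simp: exp_max_density_def indicator_def)
  then show ?thesis using False by (simp add: emeasure_density)
next
  case True
  define f where "f t = real m * exp (- t) * (1 - exp (- t)) ^ (m - 1)" for t
  have "(\<integral>\<^sup>+ t. ennreal (exp_max_density m t) * indicator {..x} t \<partial>lborel)
      = (\<integral>\<^sup>+ t. ennreal (f t) * indicator {0..x} t \<partial>lborel)"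
    by (intro nn_integral_cong) (auto simp: exp_max_density_def f_def indicator_def)
  also have "\<dots> = ennreal ((1 - exp (- x)) ^ m - (1 - exp (- 0)) ^ m)"
  proof (rule nn_integral_FTC_Icc)
    fix t :: real
    show "DERIV (\<lambda>t. (1 - exp (- t)) ^ m) t :> f t"
      unfolding f_def using assms by (auto intro!: derivative_eq_intros)
    show "0 \<le> f t" if "t \<in> {0..x}"
      using that unfolding f_def by (auto intro!: mult_nonneg_nonneg zero_le_power)
  qed (use True in \<open>auto simp: f_def\<close>)
  finally show ?thesis using True assms by (simp add: emeasure_density)
qed

lemma real_distribution_exp_max_density:
  assumes "0 < m"
  shows "real_distribution (density lborel (exp_max_density m))"
proof -
  define f where "f t = real m * exp (- t) * (1 - exp (- t)) ^ (m - 1)" for t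
  have "(\<integral>\<^sup>+ t. ennreal (exp_max_density m t) \<partial>lborel) = (\<integral>\<^sup>+ t. ennreal (f t) * indicator {0..} t \<partial>lborel)"
    by (intro nn_integral_cong) (auto simp: exp_max_density_def f_def indicator_def)
  also have "\<dots> = ennreal (1 - (1 - exp (- 0)) ^ m)"
  proof (rule nn_integral_FTC_atLeast)
    fix t :: real
    show "DERIV (\<lambda>t. (1 - exp (- t)) ^ m) t :> f t"
      unfolding f_def using assms by (auto intro!: derivative_eq_intros)
    show "0 \<le> f t" if "0 \<le> t"
      using that unfolding f_def by (auto intro!: mult_nonneg_nonneg zero_le_power)
    have "((\<lambda>t::real. exp (- t)) \<longlongrightarrow> 0) at_top"
      by (rule filterlim_compose[OF exp_at_bot filterlim_uminus_at_bot_at_top])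
    then have "((\<lambda>t::real. (1 - exp (- t)) ^ m) \<longlongrightarrow> (1 - 0) ^ m) at_top"
      by (intro tendsto_intros)
    then show "((\<lambda>t::real. (1 - exp (- t)) ^ m) \<longlongrightarrow> 1) at_top" by simp
  qed (simp add: f_def)
  finally have "emeasure (density lborel (exp_max_density m)) UNIV = 1"
    using assms by (simp add: emeasure_density)
  then show ?thesis
    by (auto intro!: prob_spaceI simp: real_distribution_def real_distribution_axioms_def)
qed

lemma cdf_exp_max_density:
  assumes "0 < m"
  shows "cdf (density lborel (exp_max_density m)) x = (if 0 \<le> x then (1 - exp (- x)) ^ m else 0)"
  unfolding cdf_def measure_def emeasure_exp_max_density_atMost[OF assms]
  by (auto intro!: zero_le_power)

section \<open>The Pareto distribution\<close>

definition pareto_density :: "real \<Rightarrow> real \<Rightarrow> real \<Rightarrow> real" where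
  "pareto_density \<nu> a x = (if \<nu> < x then a * \<nu> powr a * x powr (- a - 1) else 0)"

abbreviation pareto_measure :: "real \<Rightarrow> real \<Rightarrow> real measure" where
  "pareto_measure \<nu> a \<equiv> density lborel (pareto_density \<nu> a)"

lemma borel_measurable_pareto_density [measurable]: "pareto_density \<nu> a \<in> borel_measurable borel"
  unfolding pareto_density_def by measurable

lemma has_real_derivative_pareto_antiderivative:
  assumes "0 < t"
  shows "((\<lambda>t. - (\<nu> powr a * t powr (- a))) has_real_derivative a * \<nu> powr a * t powr (- a - 1)) (at t)"
  using assms by (auto intro!: derivative_eq_intros simp: algebra_simps)

lemma emeasure_pareto_density_atMost:
  assumes "0 < \<nu>" "0 < a"
  shows "emeasure (pareto_measure \<nu> a) {..x} = ennreal (pareto_cdf \<nu> a x)"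
proof (cases "\<nu> < x")
  case False
  then have "(\<integral>\<^sup>+ t. ennreal (pareto_density \<nu> a t) * indicator {..x} t \<partial>lborel) = (\<integral>\<^sup>+ t. 0 \<partial>(lborel :: real measure))"
    by (intro nn_integral_cong) (auto simp: pareto_density_def indicator_def)
  then show ?thesis using False by (simp add: emeasure_density pareto_cdf_def)
next
  case True
  define f where "f t = a * \<nu> powr a * t powr (- a - 1)" for t
  have "(\<integral>\<^sup>+ t. ennreal (pareto_density \<nu> a t) * indicator {..x} t \<partial>lborel)
      = (\<integral>\<^sup>+ t. ennreal (f t) * indicator {\<nu>..x} t \<partial>lborel)"
    using AE_lborel_singleton[of \<nu>]
    by (intro nn_integral_cong_AE) (auto simp: pareto_density_def f_def indicator_def elim!: eventually_mono)
  also have "\<dots> = ennreal (- (\<nu> powr a * x powr (- a)) - - (\<nu> powr a * \<nu> powr (- a)))"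
    using True assms unfolding f_def
    by (intro nn_integral_FTC_Icc has_real_derivative_pareto_antiderivative) auto
  also have "- (\<nu> powr a * x powr (- a)) - - (\<nu> powr a * \<nu> powr (- a)) = pareto_cdf \<nu> a x"
    using True assms by (simp add: pareto_cdf_def powr_divide powr_minus_divide powr_add[symmetric])
  finally show ?thesis by (simp add: emeasure_density)
qed

lemma emeasure_pareto_density_UNIV:
  assumes "0 < \<nu>" "0 < a"
  shows "emeasure (pareto_measure \<nu> a) UNIV = 1"
proof -
  define f where "f t = a * \<nu> powr a * t powr (- a - 1)" for t
  have "(\<integral>\<^sup>+ t. ennreal (pareto_density \<nu> a t) \<partial>lborel) = (\<integral>\<^sup>+ t. ennreal (f t) * indicator {\<nu>..} t \<partial>lborel)"
    using AE_lborel_singleton[of \<nu>]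
    by (intro nn_integral_cong_AE) (auto simp: pareto_density_def f_def indicator_def elim!: eventually_mono)
  also have "\<dots> = ennreal (0 - - (\<nu> powr a * \<nu> powr (- a)))"
  proof (rule nn_integral_FTC_atLeast[where F="\<lambda>t. - (\<nu> powr a * t powr (- a))"])
    fix t :: real
    assume "\<nu> \<le> t"
    then show "((\<lambda>t. - (\<nu> powr a * t powr (- a))) has_real_derivative f t) (at t)"
      unfolding f_def using assms by (intro has_real_derivative_pareto_antiderivative) auto
    show "0 \<le> f t" unfolding f_def using assms by auto
  next
    have "((\<lambda>t::real. t powr (- a)) \<longlongrightarrow> 0) at_top"
      using assms by (intro tendsto_neg_powr filterlim_ident) auto
    then have "((\<lambda>t::real. - (\<nu> powr a * t powr (- a))) \<longlongrightarrow> - (\<nu> powr a * 0)) at_top"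
      by (intro tendsto_intros)
    then show "((\<lambda>t::real. - (\<nu> powr a * t powr (- a))) \<longlongrightarrow> 0) at_top" by simp
  qed (simp add: f_def)
  also have "0 - - (\<nu> powr a * \<nu> powr (- a)) = 1"
    using assms by (simp add: powr_add[symmetric])
  finally show ?thesis by (simp add: emeasure_density)
qed

lemma real_distribution_pareto_density:
  assumes "0 < \<nu>" "0 < a"
  shows "real_distribution (pareto_measure \<nu> a)"
  using emeasure_pareto_density_UNIV[OF assms]
  by (auto intro!: prob_spaceI simp: real_distribution_def real_distribution_axioms_def)

lemma cdf_pareto_density:
  assumes "0 < \<nu>" "0 < a"
  shows "cdf (pareto_measure \<nu> a) x = pareto_cdf \<nu> a x"
proof -
  have "0 \<le> pareto_cdf \<nu> a x"
  proof (cases "\<nu> < x")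
    case True
    then have "\<nu> powr a \<le> x powr a" using assms by (intro powr_mono2) auto
    then show ?thesis using True assms by (auto simp: pareto_cdf_def powr_divide divide_le_eq_1)
  qed (simp add: pareto_cdf_def)
  then show ?thesis
    unfolding cdf_def measure_def emeasure_pareto_density_atMost[OF assms] by simp
qed

lemma emeasure_density_lborel_singleton:
  assumes "f \<in> borel_measurable borel"
  shows "emeasure (density lborel f) {y :: real} = 0"
proof -
  have "(\<integral>\<^sup>+ t. f t * indicator {y} t \<partial>lborel) = (\<integral>\<^sup>+ t. 0 \<partial>(lborel :: real measure))"
    using AE_lborel_singleton[of y]
    by (intro nn_integral_cong_AE) (auto simp: indicator_def elim!: eventually_mono)
  then show ?thesis using assms by (simp add: emeasure_density)
qed

lemma powr_minus_le_1: "1 \<le> (k :: real) \<Longrightarrow> 0 \<le> a \<Longrightarrow> k powr - a \<le> 1"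
  using powr_mono[of "- a" 0 k] by simp

lemma emeasure_pareto_density_Ioc:
  assumes "0 < \<nu>" "0 < a" "\<nu> < y" "1 \<le> k"
  shows "emeasure (pareto_measure \<nu> a) {y<..k * y} = ennreal ((\<nu> / y) powr a * (1 - k powr - a))"
proof -
  interpret real_distribution "pareto_measure \<nu> a"
    using assms by (intro real_distribution_pareto_density) auto
  have y: "0 < y" "y \<le> k * y"
    using assms mult_right_mono[OF \<open>1 \<le> k\<close>, of y] by auto
  have "(\<nu> / (k * y)) powr a = (\<nu> / y) powr a * k powr - a"
    using assms y by (simp add: powr_divide powr_mult powr_minus field_simps)
  moreover have "\<nu> < k * y" using assms y by linarith
  ultimately have "pareto_cdf \<nu> a (k * y) - pareto_cdf \<nu> a y = (\<nu> / y) powr a * (1 - k powr - a)"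
    using assms by (simp add: pareto_cdf_def algebra_simps)
  then show ?thesis
    using emeasure_Ioc[OF y(2)] assms by (simp add: cdf_pareto_density)
qed

lemma emeasure_pareto_density_Icc:
  assumes "0 < \<nu>" "0 < a" "\<nu> < y" "1 \<le> k"
  shows "emeasure (pareto_measure \<nu> a) {y..k * y} = ennreal ((\<nu> / y) powr a * (1 - k powr - a))"
proof -
  have "y \<le> k * y" using assms mult_right_mono[OF \<open>1 \<le> k\<close>, of y] by simp
  then have "{y..k * y} = {y} \<union> {y<..k * y}" by auto
  then have "emeasure (pareto_measure \<nu> a) {y..k * y}
      = emeasure (pareto_measure \<nu> a) {y}
        + emeasure (pareto_measure \<nu> a) {y<..k * y}"
    by (simp only:) (rule plus_emeasure[symmetric]; auto)
  then show ?thesis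
    using emeasure_pareto_density_Ioc[OF assms] emeasure_density_lborel_singleton by simp
qed

lemma nn_integral_pareto_density_tail_power:
  assumes "0 < \<nu>" "0 < a"
  shows "(\<integral>\<^sup>+ t. ennreal (pareto_density \<nu> a t) * ennreal ((\<nu> / t) powr (a * real m)) \<partial>lborel)
           = ennreal (1 / real (Suc m))"
proof -
  have "ennreal (pareto_density \<nu> a t) * ennreal ((\<nu> / t) powr (a * real m))
      = ennreal (1 / real (Suc m)) * ennreal (pareto_density \<nu> (a * real (Suc m)) t)" for t
  proof (cases "\<nu> < t")
    case True
    then have t: "0 < t" using assms by simp
    have "(\<nu> / t) powr (a * real m) * (a * \<nu> powr a * t powr (- a - 1))
        = a * (exp (a * real m * (ln \<nu> - ln t)) * exp (a * ln \<nu>) * exp ((- a - 1) * ln t))"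
      using t assms by (simp add: powr_def ln_div)
    also have "exp (a * real m * (ln \<nu> - ln t)) * exp (a * ln \<nu>) * exp ((- a - 1) * ln t)
       = exp ((a * real (Suc m)) * ln \<nu>) * exp ((- (a * real (Suc m)) - 1) * ln t)"
      by (simp only: mult_exp_exp) (rule arg_cong[where f=exp], simp add: algebra_simps)
    also have "a * \<dots> = 1 / real (Suc m)
        * (a * real (Suc m) * \<nu> powr (a * real (Suc m)) * t powr (- (a * real (Suc m)) - 1))"
      using t assms by (simp add: powr_def del: of_nat_Suc)
    finally show ?thesis
      using True assms by (simp add: pareto_density_def ennreal_mult'[symmetric] mult.commute del: of_nat_Suc)
  qed (simp add: pareto_density_def)
  then have "(\<integral>\<^sup>+ t. ennreal (pareto_density \<nu> a t) * ennreal ((\<nu> / t) powr (a * real m)) \<partial>lborel)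
      = ennreal (1 / real (Suc m)) * emeasure (pareto_measure \<nu> (a * real (Suc m))) UNIV"
    by (simp add: nn_integral_cmult emeasure_density)
  also have "\<dots> = ennreal (1 / real (Suc m))"
    using emeasure_pareto_density_UNIV[of \<nu> "a * real (Suc m)"] assms by simp
  finally show ?thesis .
qed

section \<open>Samples with bounded spread\<close>

(* Ties are broken towards the smallest index, so that different j give disjoint events. *)
definition first_argmin :: "nat \<Rightarrow> (nat \<Rightarrow> real) \<Rightarrow> nat \<Rightarrow> bool" where
  "first_argmin n x j \<longleftrightarrow> j < n \<and> (\<forall>i\<in>{..<n}. (i < j \<longrightarrow> x j < x i) \<and> (j < i \<longrightarrow> x j \<le> x i))"

lemma first_argmin_unique:
  assumes "first_argmin n x j" "first_argmin n x j'"
  shows "j = j'"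
  using assms unfolding first_argmin_def by (metis lessThan_iff linorder_neqE_nat not_le)

lemma first_argmin_le:
  assumes "first_argmin n x j" "i < n"
  shows "x j \<le> x i"
  using assms unfolding first_argmin_def by (cases i j rule: linorder_cases) auto

lemma first_argmin_Min:
  assumes "first_argmin n x j"
  shows "Min (x ` {..<n}) = x j"
  using assms first_argmin_le[OF assms] by (intro Min_eqI) (auto simp: first_argmin_def)

lemma first_argmin_exists:
  assumes "0 < n"
  obtains j where "first_argmin n x j"
proof -
  have "Min (x ` {..<n}) \<in> x ` {..<n}" using assms by (intro Min_in) auto
  then obtain m where m: "m < n" "x m = Min (x ` {..<n})" by auto
  define j where "j = (LEAST j. j < n \<and> x j = Min (x ` {..<n}))"
  have j: "j < n" "x j = Min (x ` {..<n})"
    unfolding j_def using m by (metis (mono_tags, lifting) LeastI)+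
  have min_le: "Min (x ` {..<n}) \<le> x i" if "i < n" for i
    using that by (intro Min_le) auto
  have "x j < x i" if "i < j" for i
  proof -
    have "\<not> (i < n \<and> x i = Min (x ` {..<n}))"
      using not_less_Least[of i "\<lambda>j. j < n \<and> x j = Min (x ` {..<n})"] that unfolding j_def by blast
    moreover have "i < n" using that j(1) by simp
    ultimately show ?thesis using min_le[of i] j(2) by (simp add: order_less_le)
  qed
  then have "first_argmin n x j"
    unfolding first_argmin_def using j min_le by auto
  then show thesis by (rule that)
qed

lemma Max_le_mult_Min_iff:
  assumes "0 < n"
  shows "Max (x ` {..<n}) \<le> k * Min (x ` {..<n}) \<longleftrightarrow>
           (\<exists>j. first_argmin n x j \<and> (\<forall>i\<in>{..<n}. x i \<le> k * x j))"
proof -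
  obtain j where j: "first_argmin n x j" using first_argmin_exists[OF assms] .
  have "x ` {..<n} \<noteq> {}" using assms by auto
  then have "Max (x ` {..<n}) \<le> k * Min (x ` {..<n}) \<longleftrightarrow> (\<forall>i\<in>{..<n}. x i \<le> k * x j)"
    by (simp add: first_argmin_Min[OF j] Max_le_iff)
  also have "\<dots> \<longleftrightarrow> (\<exists>j. first_argmin n x j \<and> (\<forall>i\<in>{..<n}. x i \<le> k * x j))"
    using j first_argmin_unique[OF j] by metis
  finally show ?thesis .
qed

definition spread_set :: "real \<Rightarrow> real \<Rightarrow> nat \<Rightarrow> nat \<Rightarrow> (nat \<Rightarrow> real) set" where
  "spread_set \<nu> k n j = {x \<in> space (PiM {..<n} (\<lambda>_. borel)).
     \<nu> < x j \<and> first_argmin n x j \<and> (\<forall>i\<in>{..<n}. x i \<le> k * x j)}"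

lemma sets_spread_set:
  assumes "j < n"
  shows "spread_set \<nu> k n j \<in> sets (PiM {..<n} (\<lambda>_. borel))"
proof -
  let ?N = "PiM {..<n} (\<lambda>_. borel :: real measure)"
  have comp: "(\<lambda>x. x l) \<in> borel_measurable ?N" if "l < n" for l
    using that by (intro measurable_component_singleton) auto
  have "{x \<in> space ?N. (i < j \<longrightarrow> x j < x i) \<and> (j < i \<longrightarrow> x j \<le> x i) \<and> x i \<le> k * x j} \<in> sets ?N"
    if "i \<in> {..<n}" for i
    using comp[of i] comp[of j] that assms
    by (intro sets.sets_Collect_conj sets.sets_Collect_imp sets.sets_Collect_const
        borel_measurable_less borel_measurable_le borel_measurable_times borel_measurable_const) auto
  then have "{x \<in> space ?N. \<forall>i\<in>{..<n}. (i < j \<longrightarrow> x j < x i) \<and> (j < i \<longrightarrow> x j \<le> x i) \<and> x i \<le> k * x j}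
      \<in> sets ?N"
    by (rule sets.sets_Collect_finite_All') (use assms in auto)
  moreover have "{x \<in> space ?N. \<nu> < x j} \<in> sets ?N"
    using comp[OF assms] by (intro borel_measurable_less borel_measurable_const)
  moreover have "spread_set \<nu> k n j = {x \<in> space ?N. \<nu> < x j} \<inter>
      {x \<in> space ?N. \<forall>i\<in>{..<n}. (i < j \<longrightarrow> x j < x i) \<and> (j < i \<longrightarrow> x j \<le> x i) \<and> x i \<le> k * x j}"
    using assms unfolding spread_set_def first_argmin_def by auto
  ultimately show ?thesis by (simp only: sets.Int)
qed

lemma spread_set_slice_iff:
  assumes "j < n" "0 < \<nu>" "\<nu> < y" "1 \<le> k" "x \<in> extensional ({..<n} - {j})"
  shows "x(j := y) \<in> spread_set \<nu> k n j \<longleftrightarrow>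
           x \<in> PiE ({..<n} - {j}) (\<lambda>i. if i < j then {y<..k * y} else {y..k * y})"
    (is "_ \<longleftrightarrow> _ \<in> PiE ?I ?A")
proof -
  have "x(j := y) \<in> space (PiM {..<n} (\<lambda>_. borel))"
    using assms(1,5) by (auto simp: space_PiM extensional_def split: if_splits)
  then have "x(j := y) \<in> spread_set \<nu> k n j \<longleftrightarrow>
      (\<forall>i\<in>{..<n}. (i < j \<longrightarrow> y < (x(j := y)) i) \<and> (j < i \<longrightarrow> y \<le> (x(j := y)) i)) \<and>
      (\<forall>i\<in>{..<n}. (x(j := y)) i \<le> k * y)"
    using assms(1,3) unfolding spread_set_def first_argmin_def by simp
  also have "\<dots> \<longleftrightarrow> (\<forall>i\<in>?I. x i \<in> ?A i)"
  proof -
    have "y \<le> k * y" using assms mult_right_mono[of 1 k y] by simp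
    then show ?thesis
      by (auto simp: not_less_iff_gr_or_eq) (metis Diff_iff lessThan_iff linorder_neqE_nat singletonD)
  qed
  also have "\<dots> \<longleftrightarrow> x \<in> PiE ?I ?A"
    using assms(5) by (auto simp: PiE_iff)
  finally show ?thesis .
qed

lemma product_sigma_finite_pareto_measure:
  assumes "0 < \<nu>" "0 < a"
  shows "product_sigma_finite (\<lambda>_. pareto_measure \<nu> a)"
  using real_distribution_pareto_density[OF assms]
  by (simp add: product_sigma_finite_def real_distribution_def prob_space_imp_sigma_finite)

lemma nn_integral_spread_set_slice:
  assumes "0 < \<nu>" "0 < \<beta>" "1 \<le> k" "j < n"
  shows "(\<integral>\<^sup>+ x. indicator (spread_set \<nu> k n j) (x(j := y)) \<partial>PiM ({..<n} - {j}) (\<lambda>_. pareto_measure \<nu> \<beta>))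
           = ennreal (if \<nu> < y then (1 - k powr - \<beta>) ^ (n - 1) * (\<nu> / y) powr (\<beta> * real (n - 1)) else 0)"
proof (cases "\<nu> < y")
  case False
  then show ?thesis by (simp add: spread_set_def indicator_def)
next
  case True
  let ?Q = "pareto_measure \<nu> \<beta>" and ?I = "{..<n} - {j}"
  define A where "A i = (if i < j then {y<..k * y} else {y..k * y})" for i
  define c where "c = (\<nu> / y) powr \<beta> * (1 - k powr - \<beta>)"
  interpret product_sigma_finite "\<lambda>_ :: nat. ?Q"
    by (rule product_sigma_finite_pareto_measure[OF assms(1,2)])
  have "(\<integral>\<^sup>+ x. indicator (spread_set \<nu> k n j) (x(j := y)) \<partial>PiM ?I (\<lambda>_. ?Q))
      = (\<integral>\<^sup>+ x. indicator (PiE ?I A) x \<partial>PiM ?I (\<lambda>_. ?Q))"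
  proof (rule nn_integral_cong)
    fix x assume "x \<in> space (PiM ?I (\<lambda>_. ?Q))"
    then have "x \<in> extensional ?I" by (simp add: space_PiM PiE_def)
    then show "indicator (spread_set \<nu> k n j) (x(j := y)) = (indicator (PiE ?I A) x :: ennreal)"
      using spread_set_slice_iff[OF assms(4,1) True assms(3)] unfolding A_def by (simp add: indicator_def)
  qed
  also have "\<dots> = emeasure (PiM ?I (\<lambda>_. ?Q)) (PiE ?I A)"
    by (intro nn_integral_indicator sets_PiM_I_finite) (auto simp: A_def)
  also have "\<dots> = (\<Prod>i\<in>?I. emeasure ?Q (A i))"
    by (intro emeasure_PiM) (auto simp: A_def)
  also have "\<dots> = (\<Prod>i\<in>?I. ennreal c)"
  proof (rule prod.cong[OF refl])
    fix i
    show "emeasure ?Q (A i) = ennreal c"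
      unfolding A_def c_def
      using emeasure_pareto_density_Ioc[OF assms(1,2) True assms(3)]
        emeasure_pareto_density_Icc[OF assms(1,2) True assms(3)] by simp
  qed
  also have "\<dots> = ennreal (c ^ (n - 1))"
    using powr_minus_le_1[of k \<beta>] assms by (simp add: ennreal_power c_def)
  also have "c ^ (n - 1) = (1 - k powr - \<beta>) ^ (n - 1) * (\<nu> / y) powr (\<beta> * real (n - 1))"
    using True assms by (simp add: c_def power_mult_distrib powr_realpow[symmetric] powr_powr)
  finally show ?thesis by (simp only: if_P[OF True])
qed

lemma emeasure_spread_set:
  assumes "0 < \<nu>" "0 < \<beta>" "1 \<le> k" "j < n"
  shows "emeasure (PiM {..<n} (\<lambda>_. pareto_measure \<nu> \<beta>)) (spread_set \<nu> k n j)
           = ennreal ((1 - k powr - \<beta>) ^ (n - 1) / real n)"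
proof -
  let ?Q = "pareto_measure \<nu> \<beta>" and ?S = "spread_set \<nu> k n j"
  define I where "I = {..<n} - {j}"
  define c where "c = (1 - k powr - \<beta>) ^ (n - 1)"
  interpret product_sigma_finite "\<lambda>_ :: nat. ?Q"
    by (rule product_sigma_finite_pareto_measure[OF assms(1,2)])
  have n: "{..<n} = insert j I" using assms(4) unfolding I_def by auto
  have "sets (PiM {..<n} (\<lambda>_. ?Q)) = sets (PiM {..<n} (\<lambda>_. borel))"
    by (rule sets_PiM_cong) auto
  then have S: "?S \<in> sets (PiM (insert j I) (\<lambda>_. ?Q))"
    using sets_spread_set[OF assms(4)] by (simp only: n[symmetric])
  have "emeasure (PiM {..<n} (\<lambda>_. ?Q)) ?S = (\<integral>\<^sup>+ x. indicator ?S x \<partial>PiM (insert j I) (\<lambda>_. ?Q))"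
    using S unfolding n by simp
  also have "\<dots> = (\<integral>\<^sup>+ y. (\<integral>\<^sup>+ x. indicator ?S (x(j := y)) \<partial>PiM I (\<lambda>_. ?Q)) \<partial>?Q)"
    using S by (intro product_nn_integral_insert_rev) (auto simp: I_def)
  also have "\<dots> = (\<integral>\<^sup>+ y. ennreal (pareto_density \<nu> \<beta> y)
      * ennreal (if \<nu> < y then c * (\<nu> / y) powr (\<beta> * real (n - 1)) else 0) \<partial>lborel)"
    unfolding I_def nn_integral_spread_set_slice[OF assms] c_def by (intro nn_integral_density) measurable
  also have "\<dots> = (\<integral>\<^sup>+ y. ennreal c
      * (ennreal (pareto_density \<nu> \<beta> y) * ennreal ((\<nu> / y) powr (\<beta> * real (n - 1)))) \<partial>lborel)"
    using powr_minus_le_1[of k \<beta>] assms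
    by (intro nn_integral_cong) (auto simp: c_def pareto_density_def ennreal_mult'[symmetric] mult_ac)
  also have "\<dots> = ennreal c * ennreal (1 / real (Suc (n - 1)))"
    unfolding nn_integral_pareto_density_tail_power[OF assms(1,2), symmetric]
    by (rule nn_integral_cmult) measurable
  also have "\<dots> = ennreal ((1 - k powr - \<beta>) ^ (n - 1) / real n)"
    using assms powr_minus_le_1[of k \<beta>] by (simp add: c_def ennreal_mult'[symmetric] divide_inverse)
  finally show ?thesis .
qed

lemma scaled_log_ratio_Max_Min_le_iff:
  fixes x :: "nat \<Rightarrow> real"
  assumes "0 < n" "0 < \<beta>" "\<forall>i<n. 0 < x i"
  shows "\<beta> * (ln (Max (x ` {..<n})) - ln (Min (x ` {..<n}))) \<le> r \<longleftrightarrow>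
           Max (x ` {..<n}) \<le> exp (r / \<beta>) * Min (x ` {..<n})"
proof -
  have "Min (x ` {..<n}) \<in> x ` {..<n}" "Max (x ` {..<n}) \<in> x ` {..<n}"
    using assms(1) by (intro Min_in Max_in; auto)+
  then have pos: "0 < Min (x ` {..<n})" "0 < Max (x ` {..<n})" using assms(3) by auto
  have "\<beta> * (ln (Max (x ` {..<n})) - ln (Min (x ` {..<n}))) \<le> r
      \<longleftrightarrow> ln (Max (x ` {..<n})) \<le> ln (exp (r / \<beta>) * Min (x ` {..<n}))"
    using assms(2) pos by (simp add: ln_mult field_simps)
  also have "\<dots> \<longleftrightarrow> Max (x ` {..<n}) \<le> exp (r / \<beta>) * Min (x ` {..<n})"
    using pos by simp
  finally show ?thesis .
qed

lemma scaled_log_ratio_Max_Min_nonneg: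
  fixes x :: "nat \<Rightarrow> real"
  assumes "0 < n" "0 \<le> \<beta>" "\<forall>i<n. 0 < x i"
  shows "0 \<le> \<beta> * (ln (Max (x ` {..<n})) - ln (Min (x ` {..<n})))"
proof -
  have "Min (x ` {..<n}) \<in> x ` {..<n}" using assms(1) by (intro Min_in) auto
  then have "0 < Min (x ` {..<n})" using assms(3) by auto
  moreover have "Min (x ` {..<n}) \<le> x 0" "x 0 \<le> Max (x ` {..<n})"
    using assms(1) by (intro Min_le Max_ge; simp)+
  ultimately show ?thesis using assms(2) by simp
qed

section \<open>Digamma and polygamma values at the integers\<close>

lemma Polygamma_of_nat_Suc:
  "Polygamma k (real (Suc m)) = Polygamma k 1 + (-1) ^ k * fact k * (\<Sum>i<m. 1 / real (Suc i) ^ Suc k)"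
  using Polygamma_plus_of_nat[of m "1 :: real" k] by (simp add: add.commute)

lemma inverse_powers_sums_Polygamma:
  "0 < k \<Longrightarrow> (\<lambda>i. 1 / real (Suc i) ^ Suc k) sums ((-1) ^ Suc k * Polygamma k 1 / fact k)"
  using Polygamma_LIMSEQ[of "1 :: real" k] by (simp add: inverse_eq_divide add.commute)

lemma Polygamma_1_1: "Polygamma 1 (1 :: real) = pi\<^sup>2 / 6"
proof -
  have "(\<lambda>i. 1 / real (Suc i) ^ 2) sums Polygamma 1 1"
    using inverse_powers_sums_Polygamma[of 1] by (simp add: numeral_2_eq_2)
  moreover have "(\<lambda>i. 1 / real (Suc i) ^ 2) sums (pi\<^sup>2 / 6)"
    using inverse_squares_sums by (simp add: add.commute)
  ultimately show ?thesis by (rule sums_unique2)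
qed

lemma Polygamma_2_1: "Polygamma 2 (1 :: real) = - 2 * zeta3"
proof -
  have "(\<lambda>i. 1 / real (Suc i) ^ 3) sums (- Polygamma 2 1 / 2)"
    using inverse_powers_sums_Polygamma[of 2] by (simp add: numeral_3_eq_3 numeral_2_eq_2)
  then show ?thesis unfolding zeta3_def by (simp add: sums_iff)
qed

lemma zeta3_sums: "(\<lambda>i. 1 / real (Suc i) ^ 3) sums zeta3"
  using inverse_powers_sums_Polygamma[of 2] Polygamma_2_1 by (simp add: numeral_3_eq_3 numeral_2_eq_2)

lemma Polygamma_1_of_nat:
  assumes "0 < n"
  shows "Polygamma 1 (real n) = pi\<^sup>2 / 6 - (\<Sum>i<n - 1. 1 / real (Suc i) ^ 2)"
  using Polygamma_of_nat_Suc[of 1 "n - 1"] Polygamma_1_1 assms by (simp add: numeral_2_eq_2)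

lemma Polygamma_2_of_nat:
  assumes "0 < n"
  shows "Polygamma 2 (real n) = 2 * (\<Sum>i<n - 1. 1 / real (Suc i) ^ 3) - 2 * zeta3"
  using Polygamma_of_nat_Suc[of 2 "n - 1"] Polygamma_2_1 assms by (simp add: numeral_3_eq_3 numeral_2_eq_2)

lemma Digamma_of_nat_pos:
  assumes "0 < n"
  shows "Digamma (real n) = harm (n - 1) - euler_mascheroni"
  using Digamma_of_nat[of "n - 1", where 'a = real] assms by simp

section \<open>The log-range of an iid Pareto sample\<close>

lemma powr_three_halves:
  assumes "0 \<le> x"
  shows "x powr (3 / 2) = x * sqrt x"
proof -
  have "x powr (3 / 2) = x powr (1 + 1 / 2)" by simp
  then show ?thesis unfolding powr_add using assms by (simp add: powr_half_sqrt)
qed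

locale iid_pareto_sample = prob_space M for M :: "'a measure" +
  fixes X :: "nat \<Rightarrow> 'a \<Rightarrow> real" and n :: nat and \<nu> \<beta> :: real
  assumes two_le_n: "2 \<le> n" and \<nu>_pos: "0 < \<nu>" and \<beta>_pos: "0 < \<beta>"
    and random_variable_X: "\<And>i. i < n \<Longrightarrow> X i \<in> borel_measurable M"
    and indep_X: "indep_vars (\<lambda>_. borel) X {..<n}"
    and cdf_X: "\<And>i x. i < n \<Longrightarrow> measure M {\<omega> \<in> space M. X i \<omega> \<le> x} = pareto_cdf \<nu> \<beta> x"
begin

lemma n_pos: "0 < n"
  using two_le_n by simp

definition sample :: "'a \<Rightarrow> nat \<Rightarrow> real" where
  "sample \<omega> = (\<lambda>i\<in>{..<n}. X i \<omega>)"

definition log_range :: "'a \<Rightarrow> real" where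
  "log_range \<omega> = \<beta> * (ln (Max ((\<lambda>i. X i \<omega>) ` {..<n})) - ln (Min ((\<lambda>i. X i \<omega>) ` {..<n})))"

lemma measurable_sample [measurable]: "sample \<in> measurable M (PiM {..<n} (\<lambda>_. borel))"
  unfolding sample_def by (rule measurable_restrict) (auto intro: random_variable_X)

lemma borel_measurable_log_range [measurable]: "log_range \<in> borel_measurable M"
proof -
  have [measurable]: "(\<lambda>\<omega>. Max ((\<lambda>i. X i \<omega>) ` {..<n})) \<in> borel_measurable M"
    "(\<lambda>\<omega>. Min ((\<lambda>i. X i \<omega>) ` {..<n})) \<in> borel_measurable M"
    by (intro borel_measurable_Max borel_measurable_Min; auto intro: random_variable_X)+
  show ?thesis unfolding log_range_def by measurable
qed

lemma distr_X: "i < n \<Longrightarrow> distr M borel (X i) = pareto_measure \<nu> \<beta>"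
proof (rule cdf_unique)
  assume i: "i < n"
  show "real_distribution (distr M borel (X i))" using random_variable_X[OF i] by simp
  show "real_distribution (pareto_measure \<nu> \<beta>)"
    using \<nu>_pos \<beta>_pos by (rule real_distribution_pareto_density)
  show "cdf (distr M borel (X i)) = cdf (pareto_measure \<nu> \<beta>)"
  proof
    fix x
    have "cdf (distr M borel (X i)) x = measure M {\<omega> \<in> space M. X i \<omega> \<le> x}"
      unfolding cdf_def using random_variable_X[OF i]
      by (subst measure_distr) (auto intro!: arg_cong[where f = "measure M"])
    then show "cdf (distr M borel (X i)) x = cdf (pareto_measure \<nu> \<beta>) x"
      using cdf_X[OF i] cdf_pareto_density[OF \<nu>_pos \<beta>_pos] by simp
  qed
qed

lemma distr_sample: "distr M (PiM {..<n} (\<lambda>_. borel)) sample = PiM {..<n} (\<lambda>_. pareto_measure \<nu> \<beta>)"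
proof -
  have "{..<n} \<noteq> {}" using two_le_n by (simp add: lessThan_empty_iff)
  then have "distr M (PiM {..<n} (\<lambda>_. borel)) sample = PiM {..<n} (\<lambda>i. distr M borel (X i))"
    using indep_vars_iff_distr_eq_PiM'[of "{..<n}" X "\<lambda>_. borel"] indep_X random_variable_X
    unfolding sample_def by simp
  also have "\<dots> = PiM {..<n} (\<lambda>_. pareto_measure \<nu> \<beta>)"
    by (rule PiM_cong) (auto simp: distr_X)
  finally show ?thesis .
qed

lemma AE_X_gt: "AE \<omega> in M. \<forall>i\<in>{..<n}. \<nu> < X i \<omega>"
proof (rule eventually_ball_finite)
  show "\<forall>i\<in>{..<n}. AE \<omega> in M. \<nu> < X i \<omega>"
  proof
    fix i assume "i \<in> {..<n}"
    then have i: "i < n" by simp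
    have "{\<omega> \<in> space M. X i \<omega> \<le> \<nu>} \<in> sets M" using random_variable_X[OF i] by measurable
    moreover have "emeasure M {\<omega> \<in> space M. X i \<omega> \<le> \<nu>} = 0"
      using cdf_X[OF i, of \<nu>] by (simp add: emeasure_eq_measure pareto_cdf_def)
    ultimately show "AE \<omega> in M. \<nu> < X i \<omega>"
      by (subst AE_iff_measurable[where N="{\<omega> \<in> space M. X i \<omega> \<le> \<nu>}"]) (auto simp: not_less)
  qed
qed simp

lemma prob_sample_in_spread_set:
  assumes "1 \<le> k" "j < n"
  shows "prob (sample -` spread_set \<nu> k n j \<inter> space M) = (1 - k powr - \<beta>) ^ (n - 1) / real n"
proof -
  have "prob (sample -` spread_set \<nu> k n j \<inter> space M)
      = measure (distr M (PiM {..<n} (\<lambda>_. borel)) sample) (spread_set \<nu> k n j)"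
    using sets_spread_set[OF assms(2)] by (simp add: measure_distr)
  also have "\<dots> = (1 - k powr - \<beta>) ^ (n - 1) / real n"
    unfolding distr_sample measure_def emeasure_spread_set[OF \<nu>_pos \<beta>_pos assms]
    using powr_minus_le_1[of k \<beta>] assms \<beta>_pos by simp
  finally show ?thesis .
qed

lemma log_range_le_iff:
  assumes "\<omega> \<in> space M" "\<forall>i\<in>{..<n}. \<nu> < X i \<omega>"
  shows "log_range \<omega> \<le> r \<longleftrightarrow> \<omega> \<in> (\<Union>j<n. sample -` spread_set \<nu> (exp (r / \<beta>)) n j \<inter> space M)"
proof -
  have "\<forall>i<n. 0 < X i \<omega>" using assms(2) \<nu>_pos by (auto intro: less_trans)
  then have "log_range \<omega> \<le> r \<longleftrightarrow>
      (\<exists>j. first_argmin n (\<lambda>i. X i \<omega>) j \<and> (\<forall>i\<in>{..<n}. X i \<omega> \<le> exp (r / \<beta>) * X j \<omega>))"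
    unfolding log_range_def using two_le_n \<beta>_pos
    by (simp add: scaled_log_ratio_Max_Min_le_iff Max_le_mult_Min_iff)
  also have "\<dots> \<longleftrightarrow> (\<exists>j<n. sample \<omega> \<in> spread_set \<nu> (exp (r / \<beta>)) n j)"
    using assms(2) unfolding spread_set_def sample_def first_argmin_def by (auto simp: space_PiM)
  finally show ?thesis using assms(1) by blast
qed

lemma prob_log_range_le:
  assumes "0 \<le> r"
  shows "prob {\<omega> \<in> space M. log_range \<omega> \<le> r} = (1 - exp (- r)) ^ (n - 1)"
proof -
  let ?E = "\<lambda>j. sample -` spread_set \<nu> (exp (r / \<beta>)) n j \<inter> space M"
  have E: "?E j \<in> sets M" if "j < n" for j
    using measurable_sets[OF measurable_sample sets_spread_set[OF that]] .
  have "prob {\<omega> \<in> space M. log_range \<omega> \<le> r} = prob (\<Union>j<n. ?E j)"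
  proof (rule measure_eq_AE)
    show "AE \<omega> in M. \<omega> \<in> {\<omega> \<in> space M. log_range \<omega> \<le> r} \<longleftrightarrow> \<omega> \<in> (\<Union>j<n. ?E j)"
      using AE_X_gt by eventually_elim (auto simp: log_range_le_iff)
    show "(\<Union>j<n. ?E j) \<in> sets M" using E by (intro sets.finite_UN) auto
  qed simp
  also have "\<dots> = (\<Sum>j<n. prob (?E j))"
  proof (rule finite_measure_finite_Union)
    show "disjoint_family_on ?E {..<n}"
      unfolding disjoint_family_on_def spread_set_def using first_argmin_unique by blast
  qed (use E in auto)
  also have "\<dots> = (\<Sum>j<n. (1 - exp (r / \<beta>) powr - \<beta>) ^ (n - 1) / real n)"
    using assms \<beta>_pos by (intro sum.cong refl prob_sample_in_spread_set) auto
  also have "\<dots> = (1 - exp (- r)) ^ (n - 1)"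
    using two_le_n \<beta>_pos by (simp add: powr_def)
  finally show ?thesis .
qed

lemma AE_log_range_nonneg: "AE \<omega> in M. 0 \<le> log_range \<omega>"
  using AE_X_gt
proof eventually_elim
  case (elim \<omega>)
  then show ?case
    unfolding log_range_def using two_le_n \<beta>_pos \<nu>_pos
    by (intro scaled_log_ratio_Max_Min_nonneg) (auto intro: less_trans)
qed

lemma prob_log_range_le_neg:
  assumes "r < 0"
  shows "prob {\<omega> \<in> space M. log_range \<omega> \<le> r} = 0"
proof -
  have "prob {\<omega> \<in> space M. log_range \<omega> \<le> r} = prob {}"
    using AE_log_range_nonneg assms by (intro measure_eq_AE) (auto elim!: eventually_mono)
  then show ?thesis by simp
qed

lemma distr_log_range: "distr M borel log_range = density lborel (exp_max_density (n - 1))"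
proof (rule cdf_unique)
  show "real_distribution (distr M borel log_range)" by simp
  show "real_distribution (density lborel (exp_max_density (n - 1)))"
    using two_le_n by (intro real_distribution_exp_max_density) simp
  show "cdf (distr M borel log_range) = cdf (density lborel (exp_max_density (n - 1)))"
  proof
    fix x
    have "cdf (distr M borel log_range) x = prob {\<omega> \<in> space M. log_range \<omega> \<le> x}"
      unfolding cdf_def by (subst measure_distr) (auto intro!: arg_cong[where f = prob])
    then show "cdf (distr M borel log_range) x = cdf (density lborel (exp_max_density (n - 1))) x"
      using prob_log_range_le[of x] prob_log_range_le_neg[of x] cdf_exp_max_density[of "n - 1" x] two_le_n
      by (cases "0 \<le> x") auto
  qed
qed

lemma has_bochner_integral_log_range:
  assumes "h \<in> borel_measurable borel"
    and "has_bochner_integral lborel (\<lambda>w. exp_max_density (n - 1) w * h w) I"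
  shows "has_bochner_integral M (\<lambda>\<omega>. h (log_range \<omega>)) I"
proof -
  have "has_bochner_integral (distr M borel log_range) h I"
    unfolding distr_log_range using assms
    by (intro has_bochner_integral_density) (auto simp: exp_max_density_nonneg)
  then show ?thesis
    using assms(1) by (simp add: has_bochner_integral_iff integrable_distr_eq integral_distr)
qed

lemma range_stat_eq:
  assumes "1 < \<rho>"
  shows "range_stat \<rho> n X = (\<lambda>\<omega>. log_range \<omega> / (\<beta> * ln \<rho>) + 1)"
  using assms \<beta>_pos unfolding range_stat_def log_range_def by auto

lemma has_bochner_integral_range_stat_exp:
  assumes "1 < \<rho>" "t < \<beta> * ln \<rho>"
  shows "has_bochner_integral M (\<lambda>\<omega>. exp (t * range_stat \<rho> n X \<omega>))
           ((real n - 1) * exp t * Beta (1 - t / (\<beta> * ln \<rho>)) (real n - 1))"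
proof -
  define c where "c = \<beta> * ln \<rho>"
  have "0 < c" using assms \<beta>_pos by (simp add: c_def)
  then have "has_bochner_integral lborel (\<lambda>w. exp_max_density (n - 1) w * exp (t / c * w))
      (real (n - 1) * Beta (1 - t / c) (real (n - 1)))"
    using assms two_le_n by (intro has_bochner_integral_exp_max_density_exp) (auto simp: c_def)
  from has_bochner_integral_mult_right[OF this, of "exp t"]
  have "has_bochner_integral lborel (\<lambda>w. exp_max_density (n - 1) w * exp (t * (w / c + 1)))
      (exp t * (real (n - 1) * Beta (1 - t / c) (real (n - 1))))"
    by (simp add: distrib_left exp_add mult_ac)
  from has_bochner_integral_log_range[OF _ this] show ?thesis
    using two_le_n by (simp add: range_stat_eq[OF assms(1)] c_def of_nat_diff mult_ac)
qed

lemma has_bochner_integral_range_stat: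
  assumes "1 < \<rho>"
  shows "has_bochner_integral M (range_stat \<rho> n X) (1 + (Digamma (real n) + euler_mascheroni) / (\<beta> * ln \<rho>))"
proof -
  have "has_bochner_integral lborel (\<lambda>w. exp_max_density (n - 1) w * (w / (\<beta> * ln \<rho>) + 1))
      (harm (n - 1) / (\<beta> * ln \<rho>) + 1)"
    using has_bochner_integral_exp_max_density_affine[of "n - 1" "1 / (\<beta> * ln \<rho>)" 1] two_le_n by simp
  from has_bochner_integral_log_range[OF _ this] show ?thesis
    using two_le_n by (simp add: range_stat_eq[OF assms] Digamma_of_nat_pos add.commute)
qed

lemma var_of_range_stat:
  assumes "1 < \<rho>"
  shows "var_of M (range_stat \<rho> n X) = (pi\<^sup>2 / 6 - Polygamma 1 (real n)) / (\<beta>\<^sup>2 * (ln \<rho>)\<^sup>2)"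
proof -
  define c where "c = \<beta> * ln \<rho>"
  define h :: real where "h = harm (n - 1)"
  have "0 < c" using assms \<beta>_pos by (simp add: c_def)
  have "(\<Sum>i<n - 1. 1 / real (Suc i) ^ 2) = pi\<^sup>2 / 6 - Polygamma 1 (real n)"
    using Polygamma_1_of_nat[OF n_pos] by simp
  then have "has_bochner_integral lborel (\<lambda>w. exp_max_density (n - 1) w * (w - h)\<^sup>2)
      (pi\<^sup>2 / 6 - Polygamma 1 (real n))"
    using has_bochner_integral_exp_max_density_central_2[of "n - 1"] two_le_n unfolding h_def by simp
  then have "has_bochner_integral lborel (\<lambda>w. exp_max_density (n - 1) w * (w - h)\<^sup>2 / c\<^sup>2)
      ((pi\<^sup>2 / 6 - Polygamma 1 (real n)) / c\<^sup>2)"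
    by (rule has_bochner_integral_divide_zero)
  moreover have "exp_max_density (n - 1) w * (w - h)\<^sup>2 / c\<^sup>2
      = exp_max_density (n - 1) w * (w / c + 1 - (1 + h / c))\<^sup>2" for w
    using \<open>0 < c\<close> by (simp add: power_divide diff_divide_distrib[symmetric])
  ultimately have "has_bochner_integral M (\<lambda>\<omega>. (log_range \<omega> / c + 1 - (1 + h / c))\<^sup>2)
      ((pi\<^sup>2 / 6 - Polygamma 1 (real n)) / c\<^sup>2)"
    by (intro has_bochner_integral_log_range) simp_all
  then show ?thesis
    using has_bochner_integral_integral_eq[OF has_bochner_integral_range_stat[OF assms]] two_le_n
    unfolding var_of_def range_stat_eq[OF assms] c_def h_def
    by (simp add: has_bochner_integral_iff Digamma_of_nat_pos power_mult_distrib)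
qed

lemma skew_of_range_stat:
  assumes "1 < \<rho>"
  shows "skew_of M (range_stat \<rho> n X)
           = (2 * zeta3 + Polygamma 2 (real n)) / (pi\<^sup>2 / 6 - Polygamma 1 (real n)) powr (3 / 2)"
proof -
  define c where "c = \<beta> * ln \<rho>"
  define h :: real where "h = harm (n - 1)"
  define v where "v = pi\<^sup>2 / 6 - Polygamma 1 (real n)"
  have "0 < c" using assms \<beta>_pos by (simp add: c_def)
  have "0 < v"
    unfolding v_def Polygamma_1_of_nat[OF n_pos] using two_le_n
    by (simp, intro sum_pos) (auto simp: lessThan_empty_iff)
  have sd: "sqrt (var_of M (range_stat \<rho> n X)) = sqrt v / c"
    using \<beta>_pos assms unfolding var_of_range_stat[OF assms] v_def c_def
    by (simp add: real_sqrt_divide real_sqrt_mult)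
  have "2 * (\<Sum>i<n - 1. 1 / real (Suc i) ^ 3) = 2 * zeta3 + Polygamma 2 (real n)"
    using Polygamma_2_of_nat[OF n_pos] by simp
  then have "has_bochner_integral lborel (\<lambda>w. exp_max_density (n - 1) w * (w - h) ^ 3)
      (2 * zeta3 + Polygamma 2 (real n))"
    using has_bochner_integral_exp_max_density_central_3[of "n - 1"] two_le_n unfolding h_def by simp
  then have "has_bochner_integral lborel (\<lambda>w. exp_max_density (n - 1) w * (w - h) ^ 3 / (v * sqrt v))
      ((2 * zeta3 + Polygamma 2 (real n)) / (v * sqrt v))"
    by (rule has_bochner_integral_divide_zero)
  moreover have "exp_max_density (n - 1) w * (w - h) ^ 3 / (v * sqrt v)
      = exp_max_density (n - 1) w * ((w / c + 1 - (1 + h / c)) / (sqrt v / c)) ^ 3" for w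
    using \<open>0 < c\<close> \<open>0 < v\<close>
    by (simp add: power_divide diff_divide_distrib[symmetric] power3_eq_cube)
  ultimately have "has_bochner_integral M (\<lambda>\<omega>. ((log_range \<omega> / c + 1 - (1 + h / c)) / (sqrt v / c)) ^ 3)
      ((2 * zeta3 + Polygamma 2 (real n)) / (v * sqrt v))"
    by (intro has_bochner_integral_log_range) simp_all
  then show ?thesis
    using has_bochner_integral_integral_eq[OF has_bochner_integral_range_stat[OF assms]] two_le_n
      powr_three_halves[of v] \<open>0 < v\<close>
    unfolding skew_of_def sd unfolding range_stat_eq[OF assms] c_def h_def v_def
    by (simp add: has_bochner_integral_iff Digamma_of_nat_pos)
qed

end

section \<open>Asymptotics\<close>

lemma tendsto_Polygamma_of_nat:
  assumes "0 < k"
  shows "(\<lambda>n. Polygamma k (real n)) \<longlonglongrightarrow> 0"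
proof -
  have "(\<lambda>m. Polygamma k 1 + (-1) ^ k * fact k * (\<Sum>i<m. 1 / real (Suc i) ^ Suc k))
      \<longlonglongrightarrow> Polygamma k 1 + (-1) ^ k * fact k * ((-1) ^ Suc k * Polygamma k 1 / fact k)"
    using inverse_powers_sums_Polygamma[OF assms] unfolding sums_def by (intro tendsto_intros)
  then have "(\<lambda>m. Polygamma k (real (Suc m))) \<longlonglongrightarrow> 0"
    unfolding Polygamma_of_nat_Suc by simp
  then show ?thesis by (rule LIMSEQ_imp_Suc)
qed

lemma zeta3_pos: "0 < zeta3"
proof -
  have "0 < (\<Sum>i<1. 1 / real (Suc i) ^ 3)" by simp
  also have "\<dots> \<le> zeta3"
    using zeta3_sums unfolding zeta3_def by (intro sum_le_suminf) (auto simp: sums_iff)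
  finally show ?thesis .
qed

lemma Digamma_asymp_equiv_ln:
  assumes "0 < c"
  shows "(\<lambda>n. a + (Digamma (real n) + b) / c) \<sim>[at_top] (\<lambda>n. ln (real n) / c)"
proof (rule asymp_equivI')
  have harm_ln: "(\<lambda>n. harm n - ln (real n) - 1 / real n) \<longlonglongrightarrow> euler_mascheroni - 0"
    by (intro tendsto_diff euler_mascheroni_LIMSEQ lim_const_over_n)
  have "filterlim (\<lambda>n. ln (real n)) at_infinity sequentially"
    by (intro filterlim_at_top_imp_at_infinity filterlim_compose[OF ln_at_top filterlim_real_sequentially])
  then have "(\<lambda>n. (a * c + b - euler_mascheroni + (harm n - ln (real n) - 1 / real n)) / ln (real n) + 1)
      \<longlonglongrightarrow> 0 + 1"
    by (intro tendsto_add tendsto_divide_0[OF tendsto_add[OF tendsto_const harm_ln]] tendsto_const)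
  moreover have "\<forall>\<^sub>F n in sequentially.
      (a * c + b - euler_mascheroni + (harm n - ln (real n) - 1 / real n)) / ln (real n) + 1
        = (a + (Digamma (real n) + b) / c) / (ln (real n) / c)"
    using eventually_ge_at_top[of 2]
  proof eventually_elim
    case (elim n)
    then obtain k where k: "n = Suc k" by (cases n) auto
    have "harm n = Digamma (real n) + euler_mascheroni + 1 / real n"
      using Digamma_of_nat[of k, where 'a = real] unfolding k by (simp add: harm_Suc inverse_eq_divide)
    moreover have "0 < ln (real n)" using elim by simp
    ultimately show ?case using assms by (simp add: field_simps)
  qed
  ultimately show "(\<lambda>n. (a + (Digamma (real n) + b) / c) / (ln (real n) / c)) \<longlonglongrightarrow> 1"
    by (auto intro: Lim_transform_eventually)
qed

lemma Polygamma_1_asymp_equiv_const: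
  assumes "a \<noteq> 0" "b \<noteq> 0"
  shows "(\<lambda>n. (pi\<^sup>2 / 6 - Polygamma 1 (real n)) / (a\<^sup>2 * b\<^sup>2)) \<sim>[at_top] (\<lambda>_. pi\<^sup>2 / (6 * a\<^sup>2 * b\<^sup>2))"
proof (rule tendsto_imp_asymp_equiv_const)
  have "(\<lambda>n. (pi\<^sup>2 / 6 - Polygamma 1 (real n)) / (a\<^sup>2 * b\<^sup>2)) \<longlonglongrightarrow> (pi\<^sup>2 / 6 - 0) / (a\<^sup>2 * b\<^sup>2)"
    using assms by (intro tendsto_intros tendsto_Polygamma_of_nat) simp_all
  then show "(\<lambda>n. (pi\<^sup>2 / 6 - Polygamma 1 (real n)) / (a\<^sup>2 * b\<^sup>2)) \<longlonglongrightarrow> pi\<^sup>2 / (6 * a\<^sup>2 * b\<^sup>2)"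
    by (simp add: mult.assoc)
qed (use assms in simp)

lemma skewness_asymp_equiv_const:
  "(\<lambda>n. (2 * zeta3 + Polygamma 2 (real n)) / (pi\<^sup>2 / 6 - Polygamma 1 (real n)) powr (3 / 2))
     \<sim>[at_top] (\<lambda>_. 12 * sqrt 6 * zeta3 / pi ^ 3)"
proof (rule tendsto_imp_asymp_equiv_const)
  have "(\<lambda>n. (2 * zeta3 + Polygamma 2 (real n)) / (pi\<^sup>2 / 6 - Polygamma 1 (real n)) powr (3 / 2))
      \<longlonglongrightarrow> (2 * zeta3 + 0) / (pi\<^sup>2 / 6 - 0) powr (3 / 2)"
    by (intro tendsto_intros tendsto_Polygamma_of_nat) auto
  moreover have "(pi\<^sup>2 / 6) powr (3 / 2) = pi ^ 3 / (6 * sqrt 6)"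
    using powr_three_halves[of "pi\<^sup>2 / 6"] by (simp add: real_sqrt_divide power2_eq_square power3_eq_cube)
  moreover have "2 * zeta3 / (pi ^ 3 / (6 * sqrt 6)) = 12 * sqrt 6 * zeta3 / pi ^ 3"
    by (simp add: field_simps)
  ultimately show "(\<lambda>n. (2 * zeta3 + Polygamma 2 (real n)) / (pi\<^sup>2 / 6 - Polygamma 1 (real n)) powr (3 / 2))
      \<longlonglongrightarrow> 12 * sqrt 6 * zeta3 / pi ^ 3"
    by (simp add: mult_ac)
qed (use zeta3_pos in simp)

theorem proposition2:
  fixes M :: "'a measure" and X :: "nat \<Rightarrow> nat \<Rightarrow> 'a \<Rightarrow> real"
    and \<nu> \<beta> \<rho> :: real
  assumes "prob_space M"
    and "\<nu> > 0" and "\<beta> > 0" and "\<rho> > 1"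
    and rv: "\<And>n i. 2 \<le> n \<Longrightarrow> i < n \<Longrightarrow> X n i \<in> borel_measurable M"
    and indep: "\<And>n. 2 \<le> n \<Longrightarrow> prob_space.indep_vars M (\<lambda>_. borel) (X n) {..<n}"
    and pareto: "\<And>n i x. 2 \<le> n \<Longrightarrow> i < n \<Longrightarrow>
                   measure M {\<omega> \<in> space M. X n i \<omega> \<le> x} = pareto_cdf \<nu> \<beta> x"
  shows
    "(\<forall>n\<ge>2. \<forall>t::real. t < \<beta> * ln \<rho> \<longrightarrow>
        integrable M (\<lambda>\<omega>. exp (t * range_stat \<rho> n (X n) \<omega>)) \<and>
        (\<integral>\<omega>. exp (t * range_stat \<rho> n (X n) \<omega>) \<partial>M)
          = (real n - 1) * exp t * Beta (1 - t / (\<beta> * ln \<rho>)) (real n - 1))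
     \<and> (\<forall>n\<ge>2. integrable M (range_stat \<rho> n (X n)) \<and>
        (\<integral>\<omega>. range_stat \<rho> n (X n) \<omega> \<partial>M)
          = 1 + (Digamma (real n) + euler_mascheroni) / (\<beta> * ln \<rho>))
     \<and> (\<forall>n\<ge>2. var_of M (range_stat \<rho> n (X n))
          = (pi\<^sup>2 / 6 - Polygamma 1 (real n)) / (\<beta>\<^sup>2 * (ln \<rho>)\<^sup>2))
     \<and> (\<forall>n\<ge>2. skew_of M (range_stat \<rho> n (X n))
          = (2 * zeta3 + Polygamma 2 (real n)) / (pi\<^sup>2 / 6 - Polygamma 1 (real n)) powr (3/2))
     \<and> (\<lambda>n. \<integral>\<omega>. range_stat \<rho> n (X n) \<omega> \<partial>M) \<sim>[at_top] (\<lambda>n. ln (real n) / (\<beta> * ln \<rho>))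
     \<and> (\<lambda>n. var_of M (range_stat \<rho> n (X n))) \<sim>[at_top] (\<lambda>n. pi\<^sup>2 / (6 * \<beta>\<^sup>2 * (ln \<rho>)\<^sup>2))
     \<and> (\<lambda>n. skew_of M (range_stat \<rho> n (X n))) \<sim>[at_top] (\<lambda>n. 12 * sqrt 6 * zeta3 / pi ^ 3)"
proof -
  have sample: "iid_pareto_sample M (X n) n \<nu> \<beta>" if "2 \<le> n" for n
    using assms that unfolding iid_pareto_sample_def iid_pareto_sample_axioms_def by auto
  note mgf = iid_pareto_sample.has_bochner_integral_range_stat_exp[OF sample \<open>\<rho> > 1\<close>]
    and mean = iid_pareto_sample.has_bochner_integral_range_stat[OF sample \<open>\<rho> > 1\<close>]
    and var = iid_pareto_sample.var_of_range_stat[OF sample \<open>\<rho> > 1\<close>]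
    and skew = iid_pareto_sample.skew_of_range_stat[OF sample \<open>\<rho> > 1\<close>]
  have eventually_eq_trans: "f \<sim>[at_top] h"
    if "\<And>n. 2 \<le> n \<Longrightarrow> f n = g n" "g \<sim>[at_top] h" for f g h :: "nat \<Rightarrow> real"
    using asymp_equiv_refl_ev[of f g] that(2) eventually_at_top_linorder that(1)
    by (blast intro: asymp_equiv_trans)
  have "0 < \<beta> * ln \<rho>" using assms by simp
  then show ?thesis
    using mgf mean var skew assms
    by (auto simp: has_bochner_integral_iff
        intro!: eventually_eq_trans[OF _ Digamma_asymp_equiv_ln]
          eventually_eq_trans[OF _ Polygamma_1_asymp_equiv_const] eventually_eq_trans[OF _ skewness_asymp_equiv_const])
qed

end
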